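(* For all $0<\sigma_1<\sigma_2$, $\mathcal{C}(\sigma_1)\subsetneqq\mathcal{C}(\sigma_2)$.
   Context: $H$ is the closure in $L^2([0,L]^2)^2$ of the $\mathbb{R}^2$-valued $[0,L]^2$-periodic trigonometric polynomials $v$ with $\nabla\cdot v=0$ and $\int v\,dx=0$, with norm $|\cdot|$; $A=-\Delta$ is the Stokes operator with spectrally defined powers $A^{\alpha/2}$. Fix $\nu>0$ and $\kappa_0=2\pi/L$. For $\sigma>0$, $\mathcal{C}(\sigma)$ is the set of $u\in C^\infty([0,L]^2)\cap H$ for which there is $c_0=c_0(u)\in\mathbb{R}$ with $\frac{|A^{\alpha/2}u|^2}{\nu^2\kappa_0^{2\alpha}}\le c_0e^{\sigma\alpha^2}$ for all $\alpha\in\mathbb{N}$. *)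

theory Defs
  imports "HOL-Analysis.Analysis"
begin

definition pdiff :: "2 \<Rightarrow> (real^2 \<Rightarrow> 'b::real_normed_vector) \<Rightarrow> real^2 \<Rightarrow> 'b" where
  "pdiff i f x = frechet_derivative f (at x) (axis i 1)"

fun Ck :: "nat \<Rightarrow> (real^2 \<Rightarrow> 'b::real_normed_vector) \<Rightarrow> bool" where
  "Ck 0 f = continuous_on UNIV f"
| "Ck (Suc k) f = ((\<forall>x. f differentiable (at x)) \<and> continuous_on UNIV f \<and> (\<forall>i. Ck k (pdiff i f)))"

definition smooth_field :: "(real^2 \<Rightarrow> 'b::real_normed_vector) \<Rightarrow> bool" where
  "smooth_field f = (\<forall>k. Ck k f)"

definition periodic_field :: "real \<Rightarrow> (real^2 \<Rightarrow> 'b) \<Rightarrow> bool" where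
  "periodic_field L f = (\<forall>x i. f (x + L *\<^sub>R axis i 1) = f x)"

definition kappa0 :: "real \<Rightarrow> real" where
  "kappa0 L = 2 * pi / L"

definition fcoeff :: "real \<Rightarrow> (real^2 \<Rightarrow> real^2) \<Rightarrow> int \<times> int \<Rightarrow> 2 \<Rightarrow> complex" where
  "fcoeff L u k j = complex_of_real (1 / L^2) *
     integral (cbox 0 (vec L))
       (\<lambda>x. complex_of_real (u x $ j) *
            cis (- kappa0 L * (real_of_int (fst k) * x $ 1 + real_of_int (snd k) * x $ 2)))"

text \<open>Membership in H, via the Fourier characterisation of the L^2 closure of
  divergence-free mean-zero periodic trigonometric polynomials:
  square integrable, zero mean mode, and k . u_hat(k) = 0 for all k.\<close>
definition in_H :: "real \<Rightarrow> (real^2 \<Rightarrow> real^2) \<Rightarrow> bool" where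
  "in_H L u =
     ((\<lambda>x. (norm (u x))^2) integrable_on cbox 0 (vec L) \<and>
      (\<forall>j. fcoeff L u (0,0) j = 0) \<and>
      (\<forall>k. of_int (fst k) * fcoeff L u k 1 + of_int (snd k) * fcoeff L u k 2 = 0))"

definition stokes_eig :: "real \<Rightarrow> int \<times> int \<Rightarrow> real" where
  "stokes_eig L k = (kappa0 L)^2 * (real_of_int (fst k)^2 + real_of_int (snd k)^2)"

text \<open>Summand of |A^(alpha/2) u|^2 (Parseval: |f|^2 = L^2 * sum |f_hat k|^2).\<close>
definition Apow_term :: "real \<Rightarrow> nat \<Rightarrow> (real^2 \<Rightarrow> real^2) \<Rightarrow> int \<times> int \<Rightarrow> real" where
  "Apow_term L \<alpha> u k = L^2 * (stokes_eig L k) ^ \<alpha> *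
      ((cmod (fcoeff L u k 1))^2 + (cmod (fcoeff L u k 2))^2)"

definition Apow_norm2 :: "real \<Rightarrow> nat \<Rightarrow> (real^2 \<Rightarrow> real^2) \<Rightarrow> real" where
  "Apow_norm2 L \<alpha> u = (\<Sum>\<^sub>\<infinity>k\<in>UNIV. Apow_term L \<alpha> u k)"

definition gevrey_class :: "real \<Rightarrow> real \<Rightarrow> real \<Rightarrow> (real^2 \<Rightarrow> real^2) set" where
  "gevrey_class L \<nu> \<sigma> =
     {u. smooth_field u \<and> periodic_field L u \<and> in_H L u \<and>
         (\<exists>c0::real. \<forall>\<alpha>::nat. Apow_term L \<alpha> u summable_on UNIV \<and>
             Apow_norm2 L \<alpha> u / (\<nu>^2 * (kappa0 L) ^ (2 * \<alpha>)) \<le> c0 * exp (\<sigma> * (real \<alpha>)^2))}"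

end

theory Submission
  imports Defs
begin

text \<open>
  The inclusion holds because the defining bound only weakens as \<sigma> grows. For strictness take
  the shear flow \<open>u(x) = (f(x\<^sub>2), 0)\<close> with the lacunary profile
  \<open>f(t) = \<Sum>\<^sub>j exp(-\<tau> j^2) cos(\<kappa>\<^sub>0 B^j t)\<close>. Its only Fourier modes are \<open>(0, \<plusminus>B^j)\<close>,
  each with coefficient \<open>exp(-\<tau> j^2)/2\<close>, so \<open>|A^(\<alpha>/2) u|^2 / (\<nu>^2 \<kappa>\<^sub>0^(2\<alpha>))\<close> is a constant
  multiple of \<open>G(\<alpha>) = \<Sum>\<^sub>j exp(2\<alpha> ln B j - 2\<tau> j^2)\<close>. Completing the square in \<open>j\<close> gives
  \<open>G(\<alpha>) \<ge> exp(s \<alpha>^2 - \<tau>/2)\<close>, and \<open>G(\<alpha>) = O(exp(\<sigma> \<alpha>^2))\<close> for every \<open>\<sigma> > s\<close>, where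
  \<open>s = (ln B)^2/(2\<tau>)\<close>. So \<open>u \<in> \<C>(\<sigma>)\<close> exactly when \<open>\<sigma> > s\<close>, and \<open>B = 2\<close>,
  \<open>\<tau> = (ln 2)^2/(\<sigma>\<^sub>1 + \<sigma>\<^sub>2)\<close> put \<open>s\<close> strictly between \<open>\<sigma>\<^sub>1\<close> and \<open>\<sigma>\<^sub>2\<close>.
\<close>

section \<open>Gaussian sums\<close>

lemma exp_linear_minus_quadratic_le:
  fixes a b b' :: real and j :: nat
  assumes "0 < b'" "b' < b"
  shows "exp (a * real j - b * (real j)^2) \<le> exp (a^2 / (4 * b')) * exp (- (b - b')) ^ j"
proof -
  have "0 \<le> (a - 2 * b' * real j)^2" by simp
  then have "a * real j \<le> a^2 / (4 * b') + b' * (real j)^2"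
    using assms by (simp add: field_simps power2_eq_square)
  moreover have "real j \<le> (real j)^2" by (cases j) (auto simp: power2_eq_square)
  then have "(b - b') * real j \<le> (b - b') * (real j)^2" using assms by (intro mult_left_mono) auto
  ultimately have "a * real j - b * (real j)^2 \<le> a^2 / (4 * b') + (- (b - b')) * real j"
    by (simp add: algebra_simps)
  then have "exp (a * real j - b * (real j)^2) \<le> exp (a^2 / (4 * b') + (- (b - b')) * real j)"
    by simp
  also have "\<dots> = exp (a^2 / (4 * b')) * exp (- (b - b')) ^ j"
    by (simp add: exp_add exp_of_nat_mult[symmetric] mult.commute)
  finally show ?thesis .
qed

lemma summable_exp_linear_minus_quadratic:
  fixes a b :: real
  assumes "0 < b"
  shows "summable (\<lambda>j::nat. exp (a * real j - b * (real j)^2))"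
proof (rule summable_comparison_test)
  show "summable (\<lambda>j::nat. exp (a^2 / (4 * (b/2))) * exp (- (b - b/2)) ^ j)"
    using assms by (intro summable_mult summable_geometric) auto
  show "\<exists>N. \<forall>j\<ge>N. norm (exp (a * real j - b * (real j)^2)) \<le> exp (a^2 / (4 * (b/2))) * exp (- (b - b/2)) ^ j"
    using exp_linear_minus_quadratic_le[of "b/2" b a] assms by auto
qed

definition gauss_sum :: "real \<Rightarrow> real \<Rightarrow> real" where
  "gauss_sum a b = (\<Sum>j. exp (a * real j - b * (real j)^2))"

lemma gauss_sum_le:
  assumes "0 < b'" "b' < b"
  shows "gauss_sum a b \<le> exp (a^2 / (4 * b')) / (1 - exp (- (b - b')))"
proof -
  define r where "r = exp (- (b - b'))"
  have r: "0 < r" "r < 1" using assms by (auto simp: r_def)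
  have "gauss_sum a b \<le> (\<Sum>j. exp (a^2 / (4 * b')) * r ^ j)"
    unfolding gauss_sum_def
  proof (rule suminf_le)
    show "summable (\<lambda>j. exp (a * real j - b * (real j)^2))"
      using assms by (intro summable_exp_linear_minus_quadratic) auto
    show "summable (\<lambda>j. exp (a^2 / (4 * b')) * r ^ j)"
      using r by (intro summable_mult summable_geometric) auto
  qed (use exp_linear_minus_quadratic_le[OF assms] in \<open>simp add: r_def\<close>)
  also have "\<dots> = exp (a^2 / (4 * b')) / (1 - r)"
    using r by (simp add: suminf_mult summable_geometric suminf_geometric)
  finally show ?thesis by (simp add: r_def)
qed

lemma gauss_sum_ge:
  assumes "0 \<le> a" "0 < b"
  shows "exp (a^2 / (4 * b) - b / 4) \<le> gauss_sum a b"
proof -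
  \<comment> \<open>the term nearest to the vertex \<open>c\<close> of the parabola\<close>
  define c where "c = a / (2 * b)"
  define j where "j = nat \<lfloor>c + 1/2\<rfloor>"
  have "c \<ge> 0" using assms by (simp add: c_def)
  then have "real j = of_int \<lfloor>c + 1/2\<rfloor>" by (simp add: j_def)
  then have "\<bar>real j - c\<bar> \<le> 1/2" by linarith
  then have "(real j - c)^2 \<le> (1/2)^2" by (metis abs_ge_zero power2_abs power_mono)
  then have "b * (real j - c)^2 \<le> b / 4" using assms by (simp add: mult_left_mono power_divide)
  moreover have "a * real j - b * (real j)^2 = a^2 / (4 * b) - b * (real j - c)^2"
    using assms by (simp add: c_def field_simps power2_eq_square)
  ultimately have "exp (a^2 / (4 * b) - b / 4) \<le> exp (a * real j - b * (real j)^2)" by simp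
  also have "\<dots> \<le> gauss_sum a b"
    using sum_le_suminf[OF summable_exp_linear_minus_quadratic[OF assms(2)], of "{j}" a]
    by (simp add: gauss_sum_def)
  finally show ?thesis .
qed

lemma gauss_sum_le_exp_quadratic:
  assumes "0 < c" "0 < \<tau>" "c^2 / (2 * \<tau>) < \<sigma>"
  shows "gauss_sum (2 * real \<alpha> * c) (2 * \<tau>) \<le> exp (\<sigma> * (real \<alpha>)^2) / (1 - exp (- (2 * \<tau> - c^2 / \<sigma>)))"
proof -
  have "\<sigma> > 0" using assms by (smt (verit) divide_pos_pos zero_less_power)
  then have "0 < c^2 / \<sigma>" "c^2 / \<sigma> < 2 * \<tau>"
    using assms by (simp_all add: field_simps)
  then have "gauss_sum (2 * real \<alpha> * c) (2 * \<tau>)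
      \<le> exp ((2 * real \<alpha> * c)^2 / (4 * (c^2 / \<sigma>))) / (1 - exp (- (2 * \<tau> - c^2 / \<sigma>)))"
    by (rule gauss_sum_le)
  also have "(2 * real \<alpha> * c)^2 / (4 * (c^2 / \<sigma>)) = \<sigma> * (real \<alpha>)^2"
    using assms \<open>\<sigma> > 0\<close> by (simp add: field_simps power2_eq_square)
  finally show ?thesis .
qed

lemma gauss_sum_ge_exp_quadratic:
  assumes "0 \<le> c" "0 < \<tau>"
  shows "exp (- \<tau> / 2) * exp (c^2 / (2 * \<tau>) * (real \<alpha>)^2) \<le> gauss_sum (2 * real \<alpha> * c) (2 * \<tau>)"
proof -
  have "exp (- \<tau> / 2) * exp (c^2 / (2 * \<tau>) * (real \<alpha>)^2)
      = exp ((2 * real \<alpha> * c)^2 / (4 * (2 * \<tau>)) - 2 * \<tau> / 4)"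
    using assms by (simp add: mult_exp_exp field_simps power2_eq_square)
  also have "\<dots> \<le> gauss_sum (2 * real \<alpha> * c) (2 * \<tau>)"
    using assms by (intro gauss_sum_ge) auto
  finally show ?thesis .
qed

lemma exp_quadratic_dominates:
  fixes c K \<sigma> s :: real
  assumes "0 < K" "\<sigma> < s"
  obtains \<alpha> :: nat where "c * exp (\<sigma> * (real \<alpha>)^2) < K * exp (s * (real \<alpha>)^2)"
proof -
  obtain \<alpha> :: nat where \<alpha>: "c / (K * (s - \<sigma>)) < real \<alpha>"
    using reals_Archimedean2 by blast
  have "c < K * ((s - \<sigma>) * real \<alpha>)"
    using \<alpha> assms by (simp add: field_simps)
  also have "\<dots> \<le> K * ((s - \<sigma>) * (real \<alpha>)^2)"
  proof -
    have "real \<alpha> \<le> (real \<alpha>)^2" by (cases \<alpha>) (auto simp: power2_eq_square)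
    then show ?thesis using assms by (intro mult_left_mono) auto
  qed
  also have "\<dots> \<le> K * exp ((s - \<sigma>) * (real \<alpha>)^2)"
    using assms by (smt (verit) exp_ge_add_one_self mult_left_mono)
  finally have "c * exp (\<sigma> * (real \<alpha>)^2) < K * exp ((s - \<sigma>) * (real \<alpha>)^2) * exp (\<sigma> * (real \<alpha>)^2)"
    by simp
  also have "\<dots> = K * exp (s * (real \<alpha>)^2)"
    by (simp add: mult_exp_exp algebra_simps)
  finally show ?thesis by (rule that)
qed

section \<open>Integrals over the period\<close>

lemma cbox_vec2_eq: "cbox (u::real^2) v = {x. u$1 \<le> x$1 \<and> x$1 \<le> v$1 \<and> u$2 \<le> x$2 \<and> x$2 \<le> v$2}"
  by (auto simp: mem_box_cart forall_2)

lemma vector_nth_2: "vector [x$1, x$2] = (x::real^2)"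
  by (simp add: vec_eq_iff forall_2)

lemma content_cbox_vec2:
  "Henstock_Kurzweil_Integration.content (cbox (u::real^2) v)
   = Henstock_Kurzweil_Integration.content (cbox (u$1) (v$1)) * Henstock_Kurzweil_Integration.content (cbox (u$2) (v$2))"
proof (cases "cbox u v = {}")
  case True
  then have "v$1 < u$1 \<or> v$2 < u$2" by (auto simp: cbox_vec2_eq set_eq_iff)
  then show ?thesis using True by auto
next
  case False
  then have "u$1 \<le> v$1" "u$2 \<le> v$2" by (auto simp: cbox_vec2_eq)
  then show ?thesis using False by (simp add: content_cbox_cart UNIV_2)
qed

lemma image_cbox_vector_pair:
  "(\<lambda>p. vector [fst p, snd p] :: real^2) ` cbox (a, b) (c, d) = cbox (vector [a, b]) (vector [c, d])"
proof
  show "(\<lambda>p. vector [fst p, snd p] :: real^2) ` cbox (a, b) (c, d) \<subseteq> cbox (vector [a, b]) (vector [c, d])"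
    by (auto simp: cbox_vec2_eq cbox_Pair_eq)
  show "cbox (vector [a, b]) (vector [c, d]) \<subseteq> (\<lambda>p. vector [fst p, snd p] :: real^2) ` cbox (a, b) (c, d)"
  proof
    fix x assume "x \<in> cbox (vector [a, b]) (vector [c, d] :: real^2)"
    then have "(x$1, x$2) \<in> cbox (a, b) (c, d)" by (auto simp: cbox_vec2_eq cbox_Pair_eq)
    moreover have "x = vector [fst (x$1, x$2), snd (x$1, x$2)]" by (simp add: vector_nth_2)
    ultimately show "x \<in> (\<lambda>p. vector [fst p, snd p] :: real^2) ` cbox (a, b) (c, d)" by blast
  qed
qed

lemma image_cbox_vec2_pair: "(\<lambda>x::real^2. (x$1, x$2)) ` cbox u v = cbox (u$1, u$2) (v$1, v$2)"
proof
  show "(\<lambda>x::real^2. (x$1, x$2)) ` cbox u v \<subseteq> cbox (u$1, u$2) (v$1, v$2)"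
    by (auto simp: cbox_vec2_eq cbox_Pair_eq)
  show "cbox (u$1, u$2) (v$1, v$2) \<subseteq> (\<lambda>x::real^2. (x$1, x$2)) ` cbox u v"
  proof
    fix p assume p: "p \<in> cbox (u$1, u$2) (v$1, v$2)"
    obtain s t where st: "p = (s, t)" by force
    have "vector [s, t] \<in> cbox u v" using p st by (auto simp: cbox_vec2_eq cbox_Pair_eq)
    moreover have "p = ((vector [s, t] :: real^2) $ 1, (vector [s, t] :: real^2) $ 2)" by (simp add: st)
    ultimately show "p \<in> (\<lambda>x::real^2. (x$1, x$2)) ` cbox u v" by blast
  qed
qed

lemma has_integral_vec2_of_prod:
  assumes "(f has_integral i) (cbox (a, b) (c, d))"
  shows "((\<lambda>x::real^2. f (x$1, x$2)) has_integral i) (cbox (vector [a, b]) (vector [c, d]))"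
proof -
  define g where "g = (\<lambda>x::real^2. (x$1, x$2))"
  define h where "h = (\<lambda>p::real\<times>real. vector [fst p, snd p] :: real^2)"
  have gimg: "g ` cbox u v = cbox (u$1, u$2) (v$1, v$2)" for u v
    unfolding g_def by (rule image_cbox_vec2_pair)
  have himg: "h ` cbox (a', b') (c', d') = cbox (vector [a', b']) (vector [c', d'])" for a' b' c' d'
    unfolding h_def by (rule image_cbox_vector_pair)
  have "((\<lambda>x. f (g x)) has_integral (1 / 1) *\<^sub>R i) (h ` cbox (a, b) (c, d))"
  proof (rule has_integral_twiddle[OF _ _ _ _ _ _ _ assms])
    show "\<And>x. h (g x) = x" by (simp add: g_def h_def vector_nth_2)
    show "\<And>x. g (h x) = x" by (simp add: g_def h_def)
    show "\<And>x. continuous (at x) g" unfolding g_def by (intro continuous_intros)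
    show "\<And>u v. \<exists>w z. g ` cbox u v = cbox w z" using gimg by blast
    show "\<And>u v. \<exists>w z. h ` cbox u v = cbox w z" using himg by (metis surj_pair)
    show "\<And>u v. Henstock_Kurzweil_Integration.content (g ` cbox u v)
        = 1 * Henstock_Kurzweil_Integration.content (cbox u v)"
      by (simp add: gimg content_Pair content_cbox_vec2)
  qed simp
  then show ?thesis by (simp add: himg g_def)
qed

lemma integral_cbox_vec2_product:
  fixes \<phi> \<psi> :: "real \<Rightarrow> complex"
  assumes "continuous_on UNIV \<phi>" "continuous_on UNIV \<psi>"
  shows "integral (cbox 0 (vec L)) (\<lambda>x::real^2. \<phi> (x$1) * \<psi> (x$2))
       = integral {0..L} \<phi> * integral {0..L} \<psi>"
proof -
  define f where "f = (\<lambda>p::real\<times>real. \<phi> (fst p) * \<psi> (snd p))"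
  have cont: "continuous_on (cbox (0,0) (L,L)) f"
  proof -
    have "continuous_on UNIV (\<lambda>x::real\<times>real. \<phi> (fst x))"
      by (rule continuous_on_compose2[OF assms(1) continuous_on_fst[OF continuous_on_id]]) auto
    moreover have "continuous_on UNIV (\<lambda>x::real\<times>real. \<psi> (snd x))"
      by (rule continuous_on_compose2[OF assms(2) continuous_on_snd[OF continuous_on_id]]) auto
    ultimately show ?thesis unfolding f_def
      by (intro continuous_intros) (auto intro: continuous_on_subset)
  qed
  have "integral (cbox (0,0) (L,L)) f = integral (cbox 0 L) (\<lambda>s. integral (cbox 0 L) (\<lambda>t. f (s,t)))"
    by (rule integral_prod_continuous[OF cont])
  also have "\<dots> = integral {0..L} \<phi> * integral {0..L} \<psi>"
    by (simp add: f_def integral_mult_left integral_mult_right)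
  finally have "(f has_integral integral {0..L} \<phi> * integral {0..L} \<psi>) (cbox (0,0) (L,L))"
    using integrable_continuous[OF cont] by (metis integrable_integral)
  then have "((\<lambda>x::real^2. f (x$1, x$2)) has_integral integral {0..L} \<phi> * integral {0..L} \<psi>)
      (cbox (vector [0, 0]) (vector [L, L]))"
    by (rule has_integral_vec2_of_prod)
  moreover have "cbox (vector [0, 0]) (vector [L, L]) = cbox 0 (vec L :: real^2)"
    by (simp add: vec_eq_iff forall_2 cbox_vec2_eq)
  ultimately show ?thesis by (simp add: f_def integral_unique)
qed

lemma cis_has_integral:
  fixes \<theta> L :: real
  assumes "L \<ge> 0" "\<theta> \<noteq> 0"
  shows "((\<lambda>t. cis (\<theta> * t)) has_integral ((cis (\<theta> * L) - 1) / (\<i> * of_real \<theta>))) {0..L}"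
proof -
  define c where "c = \<i> * complex_of_real \<theta>"
  have c0: "c \<noteq> 0" using assms by (simp add: c_def)
  have e: "cis (\<theta> * t) = exp (c * of_real t)" for t by (simp add: cis_conv_exp c_def mult.assoc)
  have d: "((\<lambda>z. exp (c * z) / c) has_field_derivative exp (c * z)) (at z)" for z
    using c0 by (auto intro!: derivative_eq_intros)
  have "((\<lambda>t. exp (c * of_real t) / c) has_vector_derivative exp (c * of_real t)) (at t within {0..L})" for t
    by (rule has_vector_derivative_at_within, rule has_vector_derivative_real_field[OF d])
  then have "((\<lambda>t. exp (c * of_real t)) has_integral (exp (c * of_real L) / c - exp (c * of_real 0) / c)) {0..L}"
    using assms by (intro fundamental_theorem_of_calculus) auto
  then show ?thesis by (simp add: e diff_divide_distrib c_def)
qed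

lemma cis_kappa0_has_integral:
  fixes L :: real and m :: int
  assumes "L > 0"
  shows "((\<lambda>t. cis (kappa0 L * of_int m * t)) has_integral (if m = 0 then complex_of_real L else 0)) {0..L}"
proof (cases "m = 0")
  case True
  then show ?thesis
    using has_integral_const_real[of "1::complex" 0 L] assms by (simp add: scaleR_conv_of_real)
next
  case False
  have period: "kappa0 L * of_int m * L = 2 * pi * of_int m" using assms by (simp add: kappa0_def)
  have "cis (kappa0 L * of_int m * L) = 1" by (subst period) simp
  moreover have "kappa0 L * of_int m \<noteq> 0" using assms False by (simp add: kappa0_def)
  ultimately show ?thesis using cis_has_integral[of L "kappa0 L * of_int m"] assms False by simp
qed

lemma cos_cis_kappa0_has_integral:
  fixes L :: real and n k :: int
  assumes "L > 0" "n > 0"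
  shows "((\<lambda>t. complex_of_real (cos (kappa0 L * of_int n * t)) * cis (kappa0 L * of_int (- k) * t))
     has_integral (if \<bar>k\<bar> = n then complex_of_real (L / 2) else 0)) {0..L}"
proof -
  have e: "complex_of_real (cos (kappa0 L * of_int n * t)) * cis (kappa0 L * of_int (- k) * t)
     = (cis (kappa0 L * of_int (n - k) * t) + cis (kappa0 L * of_int (- n - k) * t)) / 2" for t
  proof -
    have "complex_of_real (cos (kappa0 L * of_int n * t))
        = (cis (kappa0 L * of_int n * t) + cis (- (kappa0 L * of_int n * t))) / 2"
      by (simp add: complex_eq_iff)
    moreover have "cis (kappa0 L * of_int n * t) * cis (kappa0 L * of_int (- k) * t)
        = cis (kappa0 L * of_int (n - k) * t)"
      by (simp add: cis_mult) (simp add: algebra_simps)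
    moreover have "cis (- (kappa0 L * of_int n * t)) * cis (kappa0 L * of_int (- k) * t)
        = cis (kappa0 L * of_int (- n - k) * t)"
      by (simp add: cis_mult) (simp add: algebra_simps)
    ultimately show ?thesis by (simp add: distrib_right add_divide_distrib)
  qed
  have "((\<lambda>t. (cis (kappa0 L * of_int (n - k) * t) + cis (kappa0 L * of_int (- n - k) * t)) / 2)
     has_integral ((if n - k = 0 then complex_of_real L else 0)
                   + (if - n - k = 0 then complex_of_real L else 0)) / 2) {0..L}"
    by (intro has_integral_divide has_integral_add cis_kappa0_has_integral assms)
  moreover have "((if n - k = 0 then complex_of_real L else 0) + (if - n - k = 0 then complex_of_real L else 0)) / 2
      = (if \<bar>k\<bar> = n then complex_of_real (L / 2) else 0)"
    using assms(2) by auto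
  ultimately show ?thesis unfolding e by simp
qed

lemma sums_integral_suminf:
  fixes f :: "nat \<Rightarrow> real \<Rightarrow> complex"
  assumes "\<And>i. continuous_on {a..b} (f i)"
    and "\<And>i t. norm (f i t) \<le> M i" "summable M"
    and "\<And>i. (f i has_integral I i) {a..b}"
  shows "I sums integral {a..b} (\<lambda>t. \<Sum>i. f i t)"
proof -
  have "uniform_limit {a..b} (\<lambda>n t. \<Sum>i<n. f i t) (\<lambda>t. \<Sum>i. f i t) sequentially"
    by (rule Weierstrass_m_test[OF _ assms(3)]) (use assms(2) in auto)
  moreover have "\<And>n. continuous_on {a..b} (\<lambda>t. \<Sum>i<n. f i t)"
    using assms(1) by (intro continuous_intros) auto
  ultimately obtain I' J where I': "\<And>n. ((\<lambda>t. \<Sum>i<n. f i t) has_integral I' n) {a..b}"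
    and J: "((\<lambda>t. \<Sum>i. f i t) has_integral J) {a..b}" and lim: "I' \<longlonglongrightarrow> J"
    by (rule uniform_limit_integral) auto
  have "I' n = (\<Sum>i<n. I i)" for n
    using has_integral_unique[OF I'[of n] has_integral_sum[OF _ assms(4), of "{..<n}"]] by simp
  then have "I sums J" using lim unfolding sums_def by presburger
  then show ?thesis using J by (simp add: integral_unique)
qed

section \<open>Trigonometric series with rapidly decreasing coefficients\<close>

definition trig_series :: "(nat \<Rightarrow> real) \<Rightarrow> (nat \<Rightarrow> real) \<Rightarrow> (nat \<Rightarrow> real) \<Rightarrow> real \<Rightarrow> real" where
  "trig_series N p q y = (\<Sum>j. p j * cos (N j * y) + q j * sin (N j * y))"

definition rapidly_decreasing :: "(nat \<Rightarrow> real) \<Rightarrow> (nat \<Rightarrow> real) \<Rightarrow> bool" where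
  "rapidly_decreasing N p = (\<forall>m. summable (\<lambda>j. \<bar>p j\<bar> * \<bar>N j\<bar> ^ m))"

lemma rapidly_decreasing_zero: "rapidly_decreasing N (\<lambda>_. 0)"
  by (simp add: rapidly_decreasing_def)

lemma rapidly_decreasing_mult_freq:
  assumes "rapidly_decreasing N p"
  shows "rapidly_decreasing N (\<lambda>j. c * N j * p j)"
  unfolding rapidly_decreasing_def
proof
  fix m
  have "summable (\<lambda>j. \<bar>c\<bar> * (\<bar>p j\<bar> * \<bar>N j\<bar> ^ Suc m))"
    using assms unfolding rapidly_decreasing_def by (intro summable_mult) blast
  then show "summable (\<lambda>j. \<bar>c * N j * p j\<bar> * \<bar>N j\<bar> ^ m)"
    by (simp add: abs_mult algebra_simps)
qed

lemma summable_abs_rapidly_decreasing: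
  "rapidly_decreasing N p \<Longrightarrow> summable (\<lambda>j. \<bar>p j\<bar>)"
  unfolding rapidly_decreasing_def by (erule allE[of _ 0]) simp

lemma summable_trig_series:
  assumes "rapidly_decreasing N p" "rapidly_decreasing N q"
  shows "summable (\<lambda>j. p j * cos (N j * y) + q j * sin (N j * y))"
proof (rule summable_comparison_test)
  show "summable (\<lambda>j. \<bar>p j\<bar> + \<bar>q j\<bar>)"
    using assms by (intro summable_add summable_abs_rapidly_decreasing)
  have "\<bar>p j * cos (N j * y) + q j * sin (N j * y)\<bar> \<le> \<bar>p j\<bar> + \<bar>q j\<bar>" for j
  proof -
    have "\<bar>p j * cos (N j * y) + q j * sin (N j * y)\<bar>
        \<le> \<bar>p j\<bar> * \<bar>cos (N j * y)\<bar> + \<bar>q j\<bar> * \<bar>sin (N j * y)\<bar>"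
      by (rule order.trans[OF abs_triangle_ineq]) (simp add: abs_mult)
    also have "\<dots> \<le> \<bar>p j\<bar> * 1 + \<bar>q j\<bar> * 1"
      by (intro add_mono mult_left_mono) auto
    finally show ?thesis by simp
  qed
  then show "\<exists>N0. \<forall>j\<ge>N0. norm (p j * cos (N j * y) + q j * sin (N j * y)) \<le> \<bar>p j\<bar> + \<bar>q j\<bar>"
    unfolding real_norm_def by blast
qed

lemma trig_series_has_real_derivative:
  assumes p: "rapidly_decreasing N p" and q: "rapidly_decreasing N q"
  shows "(trig_series N p q has_real_derivative
          trig_series N (\<lambda>j. N j * q j) (\<lambda>j. - N j * p j) y) (at y)"
proof -
  define f where "f = (\<lambda>n y. p n * cos (N n * y) + q n * sin (N n * y))"
  define f' where "f' = (\<lambda>n y. p n * (- sin (N n * y) * N n) + q n * (cos (N n * y) * N n))"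
  have d: "(f n has_field_derivative f' n x) (at x within UNIV)" for n x
    unfolding f_def f'_def by (auto intro!: derivative_eq_intros)
  have M: "summable (\<lambda>n. \<bar>p n\<bar> * \<bar>N n\<bar> ^ 1 + \<bar>q n\<bar> * \<bar>N n\<bar> ^ 1)"
    using p q unfolding rapidly_decreasing_def by (intro summable_add) blast+
  have bnd: "norm (f' n x) \<le> \<bar>p n\<bar> * \<bar>N n\<bar> ^ 1 + \<bar>q n\<bar> * \<bar>N n\<bar> ^ 1" for n x
  proof -
    have "\<bar>f' n x\<bar> \<le> \<bar>p n\<bar> * (\<bar>sin (N n * x)\<bar> * \<bar>N n\<bar>) + \<bar>q n\<bar> * (\<bar>cos (N n * x)\<bar> * \<bar>N n\<bar>)"
      unfolding f'_def by (rule order.trans[OF abs_triangle_ineq]) (simp add: abs_mult)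
    also have "\<dots> \<le> \<bar>p n\<bar> * (1 * \<bar>N n\<bar>) + \<bar>q n\<bar> * (1 * \<bar>N n\<bar>)"
      by (intro add_mono mult_left_mono mult_right_mono) auto
    finally show ?thesis by simp
  qed
  have uc: "uniformly_convergent_on UNIV (\<lambda>n x. \<Sum>i<n. f' i x)"
    by (rule Weierstrass_m_test'[OF _ M]) (use bnd in auto)
  have s0: "summable (\<lambda>n. f n 0)"
    unfolding f_def using summable_abs_rapidly_decreasing[OF p] by (simp add: summable_rabs_cancel)
  have "((\<lambda>x. \<Sum>n. f n x) has_field_derivative (\<Sum>n. f' n y)) (at y)"
    by (rule has_field_derivative_series'(2)[OF convex_UNIV d uc _ s0]) auto
  moreover have "(\<lambda>x. \<Sum>n. f n x) = trig_series N p q" by (simp add: fun_eq_iff f_def trig_series_def)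
  moreover have "(\<Sum>n. f' n y) = trig_series N (\<lambda>j. N j * q j) (\<lambda>j. - N j * p j) y"
    by (simp add: trig_series_def f'_def algebra_simps)
  ultimately show ?thesis by simp
qed

lemma continuous_on_trig_series:
  assumes "rapidly_decreasing N p" "rapidly_decreasing N q"
  shows "continuous_on UNIV (trig_series N p q)"
  using trig_series_has_real_derivative[OF assms] DERIV_isCont
  by (blast intro: continuous_at_imp_continuous_on)

lemma trig_series_cmult:
  assumes "rapidly_decreasing N p" "rapidly_decreasing N q"
  shows "c * trig_series N p q y = trig_series N (\<lambda>j. c * p j) (\<lambda>j. c * q j) y"
proof -
  have "c * trig_series N p q y = (\<Sum>j. c * (p j * cos (N j * y) + q j * sin (N j * y)))"
    unfolding trig_series_def by (rule suminf_mult[OF summable_trig_series[OF assms], symmetric])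
  also have "\<dots> = trig_series N (\<lambda>j. c * p j) (\<lambda>j. c * q j) y"
    unfolding trig_series_def by (rule suminf_cong) (simp add: distrib_left mult.assoc)
  finally show ?thesis .
qed

lemma trig_series_periodic:
  assumes "\<And>j. \<exists>n::int. N j * T = 2 * pi * of_int n"
  shows "trig_series N p q (y + T) = trig_series N p q y"
proof -
  have "cos (N j * (y + T)) = cos (N j * y) \<and> sin (N j * (y + T)) = sin (N j * y)" for j
  proof -
    obtain n :: int where "N j * T = 2 * pi * of_int n" using assms by blast
    then have "N j * (y + T) = N j * y + 2 * pi * of_int n" by (simp add: algebra_simps)
    then show ?thesis by (simp add: cos_add sin_add)
  qed
  then show ?thesis by (simp add: trig_series_def)
qed

section \<open>Shear flows\<close>

definition shear_flow :: "(real \<Rightarrow> real) \<Rightarrow> real^2 \<Rightarrow> real^2" where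
  "shear_flow f x = f (x$2) *\<^sub>R axis 1 1"

lemma shear_flow_has_derivative:
  assumes "(f has_real_derivative f') (at (x$2))"
  shows "(shear_flow f has_derivative (\<lambda>h. (f' * h$2) *\<^sub>R axis 1 1)) (at x)"
proof -
  have "((\<lambda>x::real^2. x$2) has_derivative (\<lambda>h. h$2)) (at x)"
    by (rule bounded_linear_imp_has_derivative) auto
  moreover have "(f has_derivative (\<lambda>h. f' * h)) (at (x$2))"
    using assms by (simp add: has_field_derivative_def)
  ultimately have "((\<lambda>x. f (x$2)) has_derivative (\<lambda>h. f' * h$2)) (at x)"
    by (rule has_derivative_compose)
  then show ?thesis unfolding shear_flow_def by (rule has_derivative_scaleR_left)
qed

lemma pdiff_shear_flow:
  assumes "\<And>t. (f has_real_derivative f' t) (at t)"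
  shows "pdiff i (shear_flow f) = shear_flow (\<lambda>t. axis i 1 $ 2 * f' t)"
proof
  fix x
  have "frechet_derivative (shear_flow f) (at x) = (\<lambda>h. (f' (x$2) * h$2) *\<^sub>R axis 1 1)"
    by (rule frechet_derivative_at[OF shear_flow_has_derivative[OF assms], symmetric])
  then show "pdiff i (shear_flow f) x = shear_flow (\<lambda>t. axis i 1 $ 2 * f' t) x"
    by (simp add: pdiff_def shear_flow_def mult.commute)
qed

lemma Ck_shear_flow_trig_series:
  "rapidly_decreasing N p \<Longrightarrow> rapidly_decreasing N q \<Longrightarrow> Ck k (shear_flow (trig_series N p q))"
proof (induction k arbitrary: p q)
  case 0
  have "isCont (shear_flow (trig_series N p q)) x" for x
    using shear_flow_has_derivative[OF trig_series_has_real_derivative[OF 0]]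
      has_derivative_continuous by blast
  then show ?case by (simp add: continuous_at_imp_continuous_on)
next
  case (Suc k)
  note deriv = shear_flow_has_derivative[OF trig_series_has_real_derivative[OF Suc.prems]]
  have "Ck k (pdiff i (shear_flow (trig_series N p q)))" for i
  proof -
    define c :: real where "c = axis i 1 $ 2"
    have r: "rapidly_decreasing N (\<lambda>j. N j * q j)" "rapidly_decreasing N (\<lambda>j. - N j * p j)"
      using rapidly_decreasing_mult_freq[of N q 1] rapidly_decreasing_mult_freq[of N p "- 1"] Suc.prems
      by simp_all
    have "pdiff i (shear_flow (trig_series N p q))
        = shear_flow (\<lambda>t. c * trig_series N (\<lambda>j. N j * q j) (\<lambda>j. - N j * p j) t)"
      unfolding c_def by (rule pdiff_shear_flow[OF trig_series_has_real_derivative[OF Suc.prems]])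
    also have "\<dots> = shear_flow (trig_series N (\<lambda>j. c * (N j * q j)) (\<lambda>j. c * (- N j * p j)))"
      by (simp only: trig_series_cmult[OF r])
    also have "\<dots> = shear_flow (trig_series N (\<lambda>j. c * N j * q j) (\<lambda>j. (- c) * N j * p j))"
      by (simp add: mult.assoc)
    finally show ?thesis
      by (simp only:) (intro Suc.IH rapidly_decreasing_mult_freq Suc.prems)
  qed
  moreover have "continuous_on UNIV (shear_flow (trig_series N p q))"
    using deriv has_derivative_continuous by (blast intro: continuous_at_imp_continuous_on)
  moreover have "\<forall>x. shear_flow (trig_series N p q) differentiable (at x)"
    using deriv differentiable_def by blast
  ultimately show ?case by simp
qed

section \<open>The lacunary shear flow\<close>

definition lacunary_profile :: "real \<Rightarrow> nat \<Rightarrow> real \<Rightarrow> real \<Rightarrow> real" where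
  "lacunary_profile L B \<tau> =
     trig_series (\<lambda>j. kappa0 L * real (B ^ j)) (\<lambda>j. exp (- \<tau> * (real j)^2)) (\<lambda>_. 0)"

definition lacunary_flow :: "real \<Rightarrow> nat \<Rightarrow> real \<Rightarrow> real^2 \<Rightarrow> real^2" where
  "lacunary_flow L B \<tau> = shear_flow (lacunary_profile L B \<tau>)"

lemma rapidly_decreasing_lacunary_gaussian:
  assumes "B \<ge> 1" "\<tau> > 0"
  shows "rapidly_decreasing (\<lambda>j. c * real (B ^ j)) (\<lambda>j. exp (- \<tau> * (real j)^2))"
  unfolding rapidly_decreasing_def
proof
  fix m :: nat
  have "\<bar>exp (- \<tau> * (real j)^2)\<bar> * \<bar>c * real (B ^ j)\<bar> ^ m
      = \<bar>c\<bar> ^ m * exp ((ln B * m) * real j - \<tau> * (real j)^2)" for j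
  proof -
    have "real (B ^ j) ^ m = exp (ln B) ^ (j * m)"
      using assms by (simp add: power_mult)
    also have "\<dots> = exp (real (j * m) * ln B)" by (rule exp_of_nat_mult[symmetric])
    finally have "real (B ^ j) ^ m = exp (real (j * m) * ln B)" .
    then show ?thesis
      by (simp add: abs_mult power_mult_distrib exp_diff exp_minus field_simps mult_ac)
  qed
  then show "summable (\<lambda>j. \<bar>exp (- \<tau> * (real j)^2)\<bar> * \<bar>c * real (B ^ j)\<bar> ^ m)"
    using assms by (simp only:) (intro summable_mult summable_exp_linear_minus_quadratic)
qed

lemma continuous_on_lacunary_profile:
  assumes "B \<ge> 1" "\<tau> > 0"
  shows "continuous_on UNIV (lacunary_profile L B \<tau>)"
  unfolding lacunary_profile_def
  by (intro continuous_on_trig_series rapidly_decreasing_lacunary_gaussian rapidly_decreasing_zero assms)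

lemma lacunary_profile_sums:
  assumes "B \<ge> 1" "\<tau> > 0"
  shows "(\<lambda>j. exp (- \<tau> * (real j)^2) * cos (kappa0 L * real (B ^ j) * t)) sums lacunary_profile L B \<tau> t"
proof -
  have "summable (\<lambda>j. exp (- \<tau> * (real j)^2) * cos (kappa0 L * real (B ^ j) * t)
      + 0 * sin (kappa0 L * real (B ^ j) * t))"
    using assms
    by (intro summable_trig_series rapidly_decreasing_lacunary_gaussian rapidly_decreasing_zero)
  then show ?thesis
    unfolding lacunary_profile_def trig_series_def by (simp add: summable_sums)
qed

lemma lacunary_profile_Fourier_sums:
  assumes L: "L > 0" and B: "B \<ge> 1" and \<tau>: "\<tau> > 0"
  shows "(\<lambda>j. if \<bar>k\<bar> = int (B ^ j) then complex_of_real (L/2 * exp (- \<tau> * (real j)^2)) else 0)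
     sums integral {0..L} (\<lambda>t. complex_of_real (lacunary_profile L B \<tau> t) * cis (kappa0 L * of_int (- k) * t))"
proof -
  define w where "w = (\<lambda>j::nat. exp (- \<tau> * (real j)^2))"
  define f where "f = (\<lambda>j t. complex_of_real (w j) *
      (complex_of_real (cos (kappa0 L * of_int (int (B ^ j)) * t)) * cis (kappa0 L * of_int (- k) * t)))"
  have r: "rapidly_decreasing (\<lambda>j. kappa0 L * real (B ^ j)) w"
    unfolding w_def using B \<tau> by (rule rapidly_decreasing_lacunary_gaussian)
  have profile: "complex_of_real (lacunary_profile L B \<tau> t) * cis (kappa0 L * of_int (- k) * t) = (\<Sum>j. f j t)" for t
  proof -
    have "(\<lambda>j. complex_of_real (w j * cos (kappa0 L * real (B ^ j) * t)) * cis (kappa0 L * of_int (- k) * t))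
        sums (complex_of_real (lacunary_profile L B \<tau> t) * cis (kappa0 L * of_int (- k) * t))"
      unfolding w_def by (intro sums_mult2 sums_of_real lacunary_profile_sums B \<tau>)
    then show ?thesis by (simp add: f_def mult.assoc sums_iff)
  qed
  have "continuous_on {0..L} (f j)" for j
    unfolding f_def by (intro continuous_intros)
  moreover have "norm (f j t) \<le> w j" for j t
  proof -
    have "norm (f j t) = w j * \<bar>cos (kappa0 L * of_int (int (B ^ j)) * t)\<bar>"
      by (simp add: f_def norm_mult w_def)
    also have "\<dots> \<le> w j * 1" by (intro mult_left_mono) (auto simp: w_def)
    finally show ?thesis by simp
  qed
  moreover have "summable w"
    using summable_abs_rapidly_decreasing[OF r] by (simp add: w_def)
  moreover have "(f j has_integral (if \<bar>k\<bar> = int (B ^ j) then complex_of_real (L/2 * w j) else 0)) {0..L}" for j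
  proof -
    have "int (B ^ j) > 0" using B by simp
    then have "(f j has_integral complex_of_real (w j) *
        (if \<bar>k\<bar> = int (B ^ j) then complex_of_real (L / 2) else 0)) {0..L}"
      unfolding f_def by (intro has_integral_mult_right cos_cis_kappa0_has_integral L)
    then show ?thesis by (cases "\<bar>k\<bar> = int (B ^ j)") (simp_all add: mult.commute)
  qed
  ultimately have "(\<lambda>j. if \<bar>k\<bar> = int (B ^ j) then complex_of_real (L/2 * w j) else 0)
      sums integral {0..L} (\<lambda>t. \<Sum>j. f j t)"
    by (rule sums_integral_suminf)
  then show ?thesis unfolding w_def profile[symmetric] .
qed

lemma lacunary_profile_Fourier_mode:
  assumes "L > 0" "B \<ge> 2" "\<tau> > 0" "\<bar>k\<bar> = int (B ^ j)"
  shows "integral {0..L} (\<lambda>t. complex_of_real (lacunary_profile L B \<tau> t) * cis (kappa0 L * of_int (- k) * t))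
       = complex_of_real (L/2 * exp (- \<tau> * (real j)^2))"
proof -
  have "\<bar>k\<bar> = int (B ^ i) \<longleftrightarrow> i = j" for i
    using assms(2,4) by (auto simp: power_inject_exp)
  then have "(\<lambda>i. if \<bar>k\<bar> = int (B ^ i) then complex_of_real (L/2 * exp (- \<tau> * (real i)^2)) else 0)
      = (\<lambda>i. if i = j then complex_of_real (L/2 * exp (- \<tau> * (real i)^2)) else 0)"
    by (simp only:)
  moreover have "B \<ge> 1" using assms(2) by simp
  ultimately have "(\<lambda>i. if i = j then complex_of_real (L/2 * exp (- \<tau> * (real i)^2)) else 0)
      sums integral {0..L} (\<lambda>t. complex_of_real (lacunary_profile L B \<tau> t) * cis (kappa0 L * of_int (- k) * t))"
    using lacunary_profile_Fourier_sums[OF assms(1) _ assms(3), of B k] by metis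
  then show ?thesis by (rule sums_unique2[OF _ sums_single])
qed

lemma lacunary_profile_Fourier_off_mode:
  assumes "L > 0" "B \<ge> 1" "\<tau> > 0" "\<And>j. \<bar>k\<bar> \<noteq> int (B ^ j)"
  shows "integral {0..L} (\<lambda>t. complex_of_real (lacunary_profile L B \<tau> t) * cis (kappa0 L * of_int (- k) * t)) = 0"
proof -
  have "(\<lambda>j. 0) sums integral {0..L}
      (\<lambda>t. complex_of_real (lacunary_profile L B \<tau> t) * cis (kappa0 L * of_int (- k) * t))"
    using lacunary_profile_Fourier_sums[OF assms(1-3), of k] assms(4) by simp
  then show ?thesis using sums_zero sums_unique2 by blast
qed

lemma fcoeff_lacunary_flow_2: "fcoeff L (lacunary_flow L B \<tau>) k 2 = 0"
  by (simp add: fcoeff_def lacunary_flow_def shear_flow_def axis_def)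

lemma fcoeff_lacunary_flow_1:
  assumes L: "L > 0" and B: "B \<ge> 1" and \<tau>: "\<tau> > 0"
  shows "fcoeff L (lacunary_flow L B \<tau>) (k1, k2) 1 =
    (if k1 = 0 then complex_of_real (1 / L) *
       integral {0..L} (\<lambda>t. complex_of_real (lacunary_profile L B \<tau> t) * cis (kappa0 L * of_int (- k2) * t))
     else 0)"
proof -
  define \<phi> where "\<phi> = (\<lambda>s. cis (kappa0 L * of_int (- k1) * s))"
  define \<psi> where "\<psi> = (\<lambda>t. complex_of_real (lacunary_profile L B \<tau> t) * cis (kappa0 L * of_int (- k2) * t))"
  have "complex_of_real (lacunary_flow L B \<tau> x $ 1) *
          cis (- kappa0 L * (real_of_int (fst (k1,k2)) * x $ 1 + real_of_int (snd (k1,k2)) * x $ 2))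
        = \<phi> (x$1) * \<psi> (x$2)" for x
  proof -
    have "cis (- kappa0 L * (real_of_int k1 * x $ 1 + real_of_int k2 * x $ 2))
        = cis (kappa0 L * of_int (- k1) * x$1) * cis (kappa0 L * of_int (- k2) * x$2)"
      by (simp add: cis_mult) (simp add: algebra_simps)
    then show ?thesis by (simp add: \<phi>_def \<psi>_def lacunary_flow_def shear_flow_def mult_ac)
  qed
  then have "fcoeff L (lacunary_flow L B \<tau>) (k1, k2) 1
      = complex_of_real (1 / L^2) * integral (cbox 0 (vec L)) (\<lambda>x::real^2. \<phi> (x$1) * \<psi> (x$2))"
    unfolding fcoeff_def by simp
  also have "\<dots> = complex_of_real (1 / L^2) * (integral {0..L} \<phi> * integral {0..L} \<psi>)"
  proof -
    have "continuous_on UNIV \<phi>" unfolding \<phi>_def by (intro continuous_intros)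
    moreover have "continuous_on UNIV \<psi>" unfolding \<psi>_def
      using continuous_on_lacunary_profile[OF B \<tau>, of L]
      by (intro continuous_intros continuous_on_compose2[OF continuous_on_of_real]) auto
    ultimately show ?thesis by (simp add: integral_cbox_vec2_product)
  qed
  also have "integral {0..L} \<phi> = (if k1 = 0 then complex_of_real L else 0)"
    unfolding \<phi>_def using integral_unique[OF cis_kappa0_has_integral[OF L, of "- k1"]] by simp
  finally show ?thesis
    using L by (simp add: \<psi>_def power2_eq_square)
qed

lemma Apow_term_lacunary_flow_mode:
  assumes L: "L > 0" and B: "B \<ge> 2" and \<tau>: "\<tau> > 0" and k: "\<bar>k\<bar> = int (B ^ j)"
  shows "Apow_term L \<alpha> (lacunary_flow L B \<tau>) (0, k) =
    L^2 / 4 * kappa0 L ^ (2 * \<alpha>) * exp (2 * real \<alpha> * ln (real B) * real j - 2 * \<tau> * (real j)^2)"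
proof -
  have "fcoeff L (lacunary_flow L B \<tau>) (0, k) 1
      = complex_of_real (1 / L) * complex_of_real (L/2 * exp (- \<tau> * (real j)^2))"
    using fcoeff_lacunary_flow_1[OF L _ \<tau>, of B 0 k] lacunary_profile_Fourier_mode[OF L B \<tau> k] B
    by simp
  also have "\<dots> = complex_of_real (exp (- \<tau> * (real j)^2) / 2)"
    using L by (simp add: nonzero_divide_eq_eq mult.commute)
  finally have fc: "fcoeff L (lacunary_flow L B \<tau>) (0, k) 1 = complex_of_real (exp (- \<tau> * (real j)^2) / 2)" .
  have "(cmod (fcoeff L (lacunary_flow L B \<tau>) (0, k) 1))^2 = (exp (- \<tau> * (real j)^2) / 2)^2"
    unfolding fc norm_of_real by simp
  also have "\<dots> = exp (- (2 * \<tau>) * (real j)^2) / 4"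
    by (simp add: power_divide power2_eq_square mult_exp_exp algebra_simps)
  finally have "(cmod (fcoeff L (lacunary_flow L B \<tau>) (0, k) 1))^2 = exp (- (2 * \<tau>) * (real j)^2) / 4" .
  moreover have "stokes_eig L (0, k) ^ \<alpha> = kappa0 L ^ (2 * \<alpha>) * exp (2 * real \<alpha> * ln (real B) * real j)"
  proof -
    have "real_of_int k ^ 2 = real (B ^ j) ^ 2"
      by (metis k of_int_of_nat_eq of_int_power power2_abs)
    also have "\<dots> = exp (ln (real B)) ^ (2 * j)"
      using B by (simp add: power_mult_distrib power_mult[symmetric] mult.commute)
    finally have "stokes_eig L (0, k) ^ \<alpha> = kappa0 L ^ (2 * \<alpha>) * exp (ln (real B)) ^ (2 * j * \<alpha>)"
      by (simp add: stokes_eig_def power_mult_distrib power_mult)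
    then show ?thesis by (simp add: exp_of_nat_mult[symmetric] mult_ac)
  qed
  ultimately show ?thesis
    by (simp add: Apow_term_def fcoeff_lacunary_flow_2 exp_diff exp_minus field_simps)
qed

lemma Apow_term_lacunary_flow_off_mode:
  assumes "L > 0" "B \<ge> 1" "\<tau> > 0"
    and k: "k \<notin> range (\<lambda>j. (0, int (B ^ j))) \<union> range (\<lambda>j. (0, - int (B ^ j)))"
  shows "Apow_term L \<alpha> (lacunary_flow L B \<tau>) k = 0"
proof -
  obtain k1 k2 where k12: "k = (k1, k2)" by force
  have fc1: "fcoeff L (lacunary_flow L B \<tau>) (k1, k2) 1 = 0"
  proof (cases "k1 = 0")
    case True
    have off: "\<bar>k2\<bar> \<noteq> int (B ^ j)" for j
    proof
      assume "\<bar>k2\<bar> = int (B ^ j)"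
      then have "k = (0, int (B ^ j)) \<or> k = (0, - int (B ^ j))"
        unfolding k12 using True by (cases "k2 \<ge> 0") auto
      then show False using k by blast
    qed
    show ?thesis
      unfolding fcoeff_lacunary_flow_1[OF assms(1-3)] lacunary_profile_Fourier_off_mode[OF assms(1-3) off]
      by simp
  next
    case False
    then show ?thesis using fcoeff_lacunary_flow_1[OF assms(1-3), of k1 k2] by simp
  qed
  show ?thesis unfolding k12 Apow_term_def fc1 fcoeff_lacunary_flow_2 by simp
qed

lemma has_sum_two_injective_copies:
  fixes f :: "'a \<Rightarrow> 'b::topological_comm_monoid_add"
  assumes "inj g" "inj h" "range g \<inter> range h = {}"
    and "f \<circ> g = t" "f \<circ> h = t" "\<And>k. k \<notin> range g \<union> range h \<Longrightarrow> f k = 0"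
    and "(t has_sum s) UNIV"
  shows "(f has_sum s + s) UNIV"
proof -
  have "(f has_sum s) (range g)" "(f has_sum s) (range h)"
    using assms by (simp_all add: has_sum_reindex)
  then have "(f has_sum s + s) (range g \<union> range h)"
    using assms(3) by (rule has_sum_Un_disjoint)
  moreover have "(f has_sum s + s) UNIV \<longleftrightarrow> (f has_sum s + s) (range g \<union> range h)"
    by (rule has_sum_cong_neutral) (use assms(6) in auto)
  ultimately show ?thesis by blast
qed

lemma Apow_term_lacunary_flow_has_sum:
  assumes L: "L > 0" and B: "B \<ge> 2" and \<tau>: "\<tau> > 0"
  shows "(Apow_term L \<alpha> (lacunary_flow L B \<tau>) has_sum
          (L^2 / 2 * kappa0 L ^ (2 * \<alpha>) * gauss_sum (2 * real \<alpha> * ln (real B)) (2 * \<tau>))) UNIV"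
proof -
  define T where "T = (\<lambda>j::nat. L^2 / 4 * kappa0 L ^ (2 * \<alpha>) *
                         exp (2 * real \<alpha> * ln (real B) * real j - 2 * \<tau> * (real j)^2))"
  define up where "up = (\<lambda>j::nat. ((0::int), int (B ^ j)))"
  define down where "down = (\<lambda>j::nat. ((0::int), - int (B ^ j)))"
  have summable: "summable (\<lambda>j. exp (2 * real \<alpha> * ln (real B) * real j - 2 * \<tau> * (real j)^2))"
    using \<tau> by (intro summable_exp_linear_minus_quadratic) auto
  have "inj up" "inj down"
    unfolding up_def down_def inj_def using B by (auto simp: power_inject_exp)
  moreover have "range up \<inter> range down = {}"
  proof -
    have "up i \<noteq> down j" for i j
    proof -
      have "0 < int (B ^ i)" "0 < int (B ^ j)" using B by simp_all
      then have "int (B ^ i) \<noteq> - int (B ^ j)" by linarith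
      then show ?thesis unfolding up_def down_def by simp
    qed
    then show ?thesis by blast
  qed
  moreover have "Apow_term L \<alpha> (lacunary_flow L B \<tau>) \<circ> up = T"
    and "Apow_term L \<alpha> (lacunary_flow L B \<tau>) \<circ> down = T"
    using Apow_term_lacunary_flow_mode[OF L B \<tau>] by (auto simp: T_def up_def down_def)
  moreover have "Apow_term L \<alpha> (lacunary_flow L B \<tau>) k = 0" if "k \<notin> range up \<union> range down" for k
    using Apow_term_lacunary_flow_off_mode[OF L _ \<tau>, where k = k] B that by (simp add: up_def down_def)
  moreover have "(T has_sum suminf T) UNIV"
    using summable unfolding T_def
    by (intro sums_nonneg_imp_has_sum summable_sums summable_mult) auto
  ultimately have "(Apow_term L \<alpha> (lacunary_flow L B \<tau>) has_sum suminf T + suminf T) UNIV"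
    by (rule has_sum_two_injective_copies)
  moreover have "suminf T = L^2 / 4 * kappa0 L ^ (2 * \<alpha>) * gauss_sum (2 * real \<alpha> * ln (real B)) (2 * \<tau>)"
    unfolding T_def gauss_sum_def by (rule suminf_mult[OF summable])
  ultimately show ?thesis by (simp add: mult.assoc flip: distrib_right)
qed

lemma smooth_field_lacunary_flow:
  assumes "B \<ge> 1" "\<tau> > 0"
  shows "smooth_field (lacunary_flow L B \<tau>)"
  unfolding smooth_field_def lacunary_flow_def lacunary_profile_def
  by (intro allI Ck_shear_flow_trig_series rapidly_decreasing_lacunary_gaussian
      rapidly_decreasing_zero assms)

lemma periodic_field_lacunary_flow:
  assumes "L > 0"
  shows "periodic_field L (lacunary_flow L B \<tau>)"
  unfolding periodic_field_def
proof (intro allI)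
  fix x :: "real^2" and i :: 2
  have "lacunary_profile L B \<tau> (y + L) = lacunary_profile L B \<tau> y" for y
    unfolding lacunary_profile_def
  proof (rule trig_series_periodic)
    show "\<exists>n::int. kappa0 L * real (B ^ j) * L = 2 * pi * of_int n" for j
      using assms by (intro exI[of _ "int (B ^ j)"]) (simp add: kappa0_def)
  qed
  moreover have "(x + L *\<^sub>R axis i 1) $ 2 = x$2 + (if i = 2 then L else 0)"
    by (simp add: axis_def)
  ultimately show "lacunary_flow L B \<tau> (x + L *\<^sub>R axis i 1) = lacunary_flow L B \<tau> x"
    by (simp add: lacunary_flow_def shear_flow_def)
qed

lemma in_H_lacunary_flow:
  assumes L: "L > 0" and B: "B \<ge> 2" and \<tau>: "\<tau> > 0"
  shows "in_H L (lacunary_flow L B \<tau>)"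
  unfolding in_H_def
proof (intro conjI allI)
  have B1: "B \<ge> 1" using B by simp
  have "continuous_on UNIV (lacunary_flow L B \<tau>)"
    using smooth_field_lacunary_flow[OF B1 \<tau>] unfolding smooth_field_def by (metis Ck.simps(1))
  then show "(\<lambda>x. (norm (lacunary_flow L B \<tau> x))^2) integrable_on cbox 0 (vec L)"
    by (intro integrable_continuous continuous_intros) (auto intro: continuous_on_subset)
next
  fix j :: 2
  have B1: "B \<ge> 1" and off: "\<And>i. \<bar>0::int\<bar> \<noteq> int (B ^ i)" using B by simp_all
  have "fcoeff L (lacunary_flow L B \<tau>) (0, 0) 1 = 0"
    unfolding fcoeff_lacunary_flow_1[OF L B1 \<tau>] lacunary_profile_Fourier_off_mode[OF L B1 \<tau> off]
    by simp
  then show "fcoeff L (lacunary_flow L B \<tau>) (0, 0) j = 0"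
    using fcoeff_lacunary_flow_2 exhaust_2[of j] by auto
next
  fix k :: "int \<times> int"
  obtain k1 k2 where k: "k = (k1, k2)" by force
  have "of_int k1 * fcoeff L (lacunary_flow L B \<tau>) (k1, k2) 1 = 0"
    using fcoeff_lacunary_flow_1[OF L _ \<tau>, of B k1 k2] B by simp
  then show "of_int (fst k) * fcoeff L (lacunary_flow L B \<tau>) k 1
      + of_int (snd k) * fcoeff L (lacunary_flow L B \<tau>) k 2 = 0"
    by (simp add: k fcoeff_lacunary_flow_2)
qed

lemma lacunary_flow_gevrey_quotient:
  assumes L: "L > 0" and \<nu>: "\<nu> > 0" and B: "B \<ge> 2" and \<tau>: "\<tau> > 0"
  shows "Apow_term L \<alpha> (lacunary_flow L B \<tau>) summable_on UNIV"
    and "Apow_norm2 L \<alpha> (lacunary_flow L B \<tau>) / (\<nu>^2 * kappa0 L ^ (2 * \<alpha>))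
       = L^2 / (2 * \<nu>^2) * gauss_sum (2 * real \<alpha> * ln (real B)) (2 * \<tau>)"
proof -
  note has_sum = Apow_term_lacunary_flow_has_sum[OF L B \<tau>, of \<alpha>]
  then show "Apow_term L \<alpha> (lacunary_flow L B \<tau>) summable_on UNIV"
    by (rule has_sum_imp_summable)
  have "kappa0 L > 0" using L by (simp add: kappa0_def)
  moreover have "Apow_norm2 L \<alpha> (lacunary_flow L B \<tau>)
      = L^2 / 2 * kappa0 L ^ (2 * \<alpha>) * gauss_sum (2 * real \<alpha> * ln (real B)) (2 * \<tau>)"
    unfolding Apow_norm2_def by (rule infsumI[OF has_sum])
  ultimately show "Apow_norm2 L \<alpha> (lacunary_flow L B \<tau>) / (\<nu>^2 * kappa0 L ^ (2 * \<alpha>))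
       = L^2 / (2 * \<nu>^2) * gauss_sum (2 * real \<alpha> * ln (real B)) (2 * \<tau>)"
    using \<nu> by (simp add: field_simps)
qed

lemma lacunary_flow_in_gevrey_class:
  assumes L: "L > 0" and \<nu>: "\<nu> > 0" and B: "B \<ge> 2" and \<tau>: "\<tau> > 0"
    and \<sigma>: "(ln (real B))^2 / (2 * \<tau>) < \<sigma>"
  shows "lacunary_flow L B \<tau> \<in> gevrey_class L \<nu> \<sigma>"
proof -
  define c0 where "c0 = L^2 / (2 * \<nu>^2) / (1 - exp (- (2 * \<tau> - (ln (real B))^2 / \<sigma>)))"
  have "Apow_norm2 L \<alpha> (lacunary_flow L B \<tau>) / (\<nu>^2 * kappa0 L ^ (2 * \<alpha>)) \<le> c0 * exp (\<sigma> * (real \<alpha>)^2)"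
    for \<alpha>
  proof -
    have "ln (real B) > 0" using B by simp
    then have "L^2 / (2 * \<nu>^2) * gauss_sum (2 * real \<alpha> * ln (real B)) (2 * \<tau>)
        \<le> L^2 / (2 * \<nu>^2) * (exp (\<sigma> * (real \<alpha>)^2) / (1 - exp (- (2 * \<tau> - (ln (real B))^2 / \<sigma>))))"
      using \<tau> \<sigma> by (intro mult_left_mono gauss_sum_le_exp_quadratic) auto
    then show ?thesis
      by (simp add: lacunary_flow_gevrey_quotient[OF L \<nu> B \<tau>] c0_def)
  qed
  moreover have "B \<ge> 1" using B by simp
  ultimately show ?thesis
    unfolding gevrey_class_def
    using smooth_field_lacunary_flow periodic_field_lacunary_flow[OF L] in_H_lacunary_flow[OF L B \<tau>]
      lacunary_flow_gevrey_quotient(1)[OF L \<nu> B \<tau>] \<tau>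
    by blast
qed

lemma lacunary_flow_not_in_gevrey_class:
  assumes L: "L > 0" and \<nu>: "\<nu> > 0" and B: "B \<ge> 2" and \<tau>: "\<tau> > 0"
    and \<sigma>: "\<sigma> < (ln (real B))^2 / (2 * \<tau>)"
  shows "lacunary_flow L B \<tau> \<notin> gevrey_class L \<nu> \<sigma>"
proof
  assume "lacunary_flow L B \<tau> \<in> gevrey_class L \<nu> \<sigma>"
  then obtain c0 where "\<And>\<alpha>. Apow_norm2 L \<alpha> (lacunary_flow L B \<tau>) / (\<nu>^2 * kappa0 L ^ (2 * \<alpha>))
      \<le> c0 * exp (\<sigma> * (real \<alpha>)^2)"
    unfolding gevrey_class_def by blast
  then have c0: "L^2 / (2 * \<nu>^2) * gauss_sum (2 * real \<alpha> * ln (real B)) (2 * \<tau>)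
      \<le> c0 * exp (\<sigma> * (real \<alpha>)^2)" for \<alpha>
    unfolding lacunary_flow_gevrey_quotient(2)[OF L \<nu> B \<tau>] .
  have "0 < L^2 / (2 * \<nu>^2) * exp (- \<tau> / 2)" using L \<nu> by simp
  then obtain \<alpha> :: nat where "c0 * exp (\<sigma> * (real \<alpha>)^2)
      < L^2 / (2 * \<nu>^2) * exp (- \<tau> / 2) * exp ((ln (real B))^2 / (2 * \<tau>) * (real \<alpha>)^2)"
    using \<sigma> by (rule exp_quadratic_dominates)
  also have "\<dots> \<le> L^2 / (2 * \<nu>^2) * gauss_sum (2 * real \<alpha> * ln (real B)) (2 * \<tau>)"
  proof -
    have "exp (- \<tau> / 2) * exp ((ln (real B))^2 / (2 * \<tau>) * (real \<alpha>)^2)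
        \<le> gauss_sum (2 * real \<alpha> * ln (real B)) (2 * \<tau>)"
      using B \<tau> by (intro gauss_sum_ge_exp_quadratic) auto
    then show ?thesis by (subst mult.assoc) (rule mult_left_mono, simp_all)
  qed
  also have "\<dots> \<le> c0 * exp (\<sigma> * (real \<alpha>)^2)" by (rule c0)
  finally show False by simp
qed

lemma gevrey_class_mono:
  assumes "\<sigma> \<le> \<sigma>'"
  shows "gevrey_class L \<nu> \<sigma> \<subseteq> gevrey_class L \<nu> \<sigma>'"
proof
  fix u assume "u \<in> gevrey_class L \<nu> \<sigma>"
  then obtain c0 where u: "smooth_field u" "periodic_field L u" "in_H L u"
    and c0: "\<And>\<alpha>. Apow_term L \<alpha> u summable_on UNIV \<and>
             Apow_norm2 L \<alpha> u / (\<nu>^2 * (kappa0 L) ^ (2 * \<alpha>)) \<le> c0 * exp (\<sigma> * (real \<alpha>)^2)"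
    unfolding gevrey_class_def by blast
  have "0 \<le> Apow_norm2 L 0 u / (\<nu>^2 * (kappa0 L) ^ (2 * 0))"
    unfolding Apow_norm2_def Apow_term_def stokes_eig_def
    by (intro divide_nonneg_nonneg infsum_nonneg) auto
  then have "c0 \<ge> 0" using c0[of 0] by simp
  have "Apow_term L \<alpha> u summable_on UNIV \<and>
      Apow_norm2 L \<alpha> u / (\<nu>^2 * (kappa0 L) ^ (2 * \<alpha>)) \<le> c0 * exp (\<sigma>' * (real \<alpha>)^2)" for \<alpha>
  proof -
    have "exp (\<sigma> * (real \<alpha>)^2) \<le> exp (\<sigma>' * (real \<alpha>)^2)"
      using assms by (simp add: mult_right_mono)
    then have "c0 * exp (\<sigma> * (real \<alpha>)^2) \<le> c0 * exp (\<sigma>' * (real \<alpha>)^2)"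
      using \<open>c0 \<ge> 0\<close> by (rule mult_left_mono)
    then show ?thesis using c0[of \<alpha>] by linarith
  qed
  then show "u \<in> gevrey_class L \<nu> \<sigma>'"
    using u unfolding gevrey_class_def by blast
qed

theorem proposition10p3:
  fixes L \<nu> \<sigma>1 \<sigma>2 :: real
  assumes "L > 0" and "\<nu> > 0" and "0 < \<sigma>1" and "\<sigma>1 < \<sigma>2"
  shows "gevrey_class L \<nu> \<sigma>1 \<subset> gevrey_class L \<nu> \<sigma>2"
proof
  show "gevrey_class L \<nu> \<sigma>1 \<subseteq> gevrey_class L \<nu> \<sigma>2"
    using assms(4) by (intro gevrey_class_mono) simp
  define \<tau> where "\<tau> = (ln 2)^2 / (\<sigma>1 + \<sigma>2)"
  have \<tau>: "\<tau> > 0" using assms by (simp add: \<tau>_def)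
  have "(ln (real 2))^2 / (2 * \<tau>) = (\<sigma>1 + \<sigma>2) / 2"
    using assms by (simp add: \<tau>_def field_simps)
  then have lo: "\<sigma>1 < (ln (real 2))^2 / (2 * \<tau>)" and hi: "(ln (real 2))^2 / (2 * \<tau>) < \<sigma>2"
    using assms(4) by simp_all
  have "lacunary_flow L 2 \<tau> \<in> gevrey_class L \<nu> \<sigma>2"
    by (intro lacunary_flow_in_gevrey_class assms(1,2) \<tau> hi) simp
  moreover have "lacunary_flow L 2 \<tau> \<notin> gevrey_class L \<nu> \<sigma>1"
    by (intro lacunary_flow_not_in_gevrey_class assms(1,2) \<tau> lo) simp
  ultimately show "gevrey_class L \<nu> \<sigma>1 \<noteq> gevrey_class L \<nu> \<sigma>2" by blast
qed

end
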